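(* Let $\delta\in(0,1)$ and let $\hat r_i,b_i:\mathcal A\to\mathbb R$ ($i\in[m]$) be data-dependent functions such that $b$ is a bonus term for $\hat r$ at level $\delta$. Let $\pi^{\mathrm{out}}$ be the output of the surrogate-minimization procedure described in the context. Then, with probability at least $1-\delta$, for every Nash equilibrium $\pi^*$, $$\mathrm{Gap}(\pi^{\mathrm{out}})\le 2\max_{i\in[m]}\Big[\max_{a_i'\in\mathcal A_i}\mathbb E_{\bm a_{-i}\sim\pi^*_{-i}}\, b_i(a_i',\bm a_{-i})+\mathbb E_{\bm a\sim\pi^*}\, b_i(\bm a)\Big].$$
   Context: Congestion game setting. There are $m\ge 1$ players and a finite facility set $\mathcal F$ with $F=|\mathcal F|$. Each player $i\in[m]$ has a nonempty finite action set $\mathcal A_i\subseteq 2^{\mathcal F}$ (an action is a subset of facilities). The set of joint actions $\bm a=(a_1,\dots,a_m)$ is $\mathcal A=\prod_{i=1}^m\mathcal A_i$. For $f\in\mathcal F$ let $n^f(\bm a)=|\{i\in[m]: f\in a_i\}|$. For each facility $f$ and each $\ell\in\{1,\dots,m\}$ there is a reward distribution $R^f(\cdot\mid \ell)$ supported in $[-1,1]$ with mean $r^f(\ell)$. The mean reward of player $i$ under $\bm a$ is $r_i(\bm a)=\sum_{f\in a_i} r^f(n^f(\bm a))$. A product policy is $\pi=\pi_1\otimes\cdots\otimes\pi_m$ with $\pi_i\in\Delta(\mathcal A_i)$; $(\pi_i',\pi_{-i})$ denotes $\pi$ with the $i$-th component replaced by $\pi_i'$. Let $V_i^\pi=\mathbb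 E_{\bm a\sim\pi}[r_i(\bm a)]$ and $\mathrm{Gap}(\pi)=\max_{i\in[m]}\big[\max_{\pi_i'\in\Delta(\mathcal A_i)}V_i^{(\pi_i',\pi_{-i})}-V_i^{\pi}\big]$. A Nash equilibrium (NE) is a product policy $\pi$ with $\mathrm{Gap}(\pi)=0$. Offline data: a dataset $\mathcal D=\{(\bm a^k,\bm r^k)\}_{k=1}^n$ in which $\bm a^1,\dots,\bm a^n$ are i.i.d. draws from a fixed distribution $\rho\in\Delta(\mathcal A)$ and the reward information $\bm r^k$ is generated from the game given $\bm a^k$. Bonus term: functions $\hat r_i,b_i:\mathcal A\to\mathbb R$ (computed from $\mathcal D$) are such that $b$ is a bonus term for $\hat r$ at level $\delta$ if, with probability at least $1-\delta$, $|r_i(\bm a)-\hat r_i(\bm a)|\le b_i(\bm a)$ for all $i\in[m]$ and all $\bm a\in\mathcal A$. Surrogate minimization: for a product policy $\pi$ define $\overline V_i^{\pi}=\mathbb E_{\bm a\sim\pi}[\hat r_i(\bm a)+b_i(\bm a)]$, $\underline V_i^{\pi}=\mathbb E_{\bm a\sim\pi}[\hat r_i(\bm a)-b_i(\bm a)]$, and $\overline V_i^{\dagger,\pi_{-i}}=\max_{\pi_i'\in\Delta(\mathcal A_i)}\overline V_i^{(\pi_i',\pi_{-i})}$. The output is any $\pi^{\mathrm{out}}\in\arg\min_{\pi\text{ product}}\max_{i\in[m]}\big[\overline V_i^{\dagger,\pi_{-i}}-\underline V_i^{\pi}\big]$. *)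

theory Defs
  imports "HOL-Probability.Probability"
begin

type_synonym 'f joint = "nat \<Rightarrow> 'f set"

definition joint_actions :: "nat \<Rightarrow> (nat \<Rightarrow> 'f set set) \<Rightarrow> 'f joint set" where
  "joint_actions m A = PiE {..<m} A"

definition load :: "nat \<Rightarrow> 'f joint \<Rightarrow> 'f \<Rightarrow> nat" where
  "load m a f = card {i. i < m \<and> f \<in> a i}"

definition mean_reward :: "nat \<Rightarrow> ('f \<Rightarrow> nat \<Rightarrow> real) \<Rightarrow> nat \<Rightarrow> 'f joint \<Rightarrow> real" where
  "mean_reward m rf i a = (\<Sum>f\<in>a i. rf f (load m a f))"

definition is_product_policy :: "nat \<Rightarrow> (nat \<Rightarrow> 'f set set) \<Rightarrow> (nat \<Rightarrow> 'f set pmf) \<Rightarrow> bool" where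
  "is_product_policy m A \<pi> \<longleftrightarrow> (\<forall>i<m. set_pmf (\<pi> i) \<subseteq> A i)"

definition expect_prod :: "nat \<Rightarrow> (nat \<Rightarrow> 'f set set) \<Rightarrow> (nat \<Rightarrow> 'f set pmf) \<Rightarrow> ('f joint \<Rightarrow> real) \<Rightarrow> real" where
  "expect_prod m A \<pi> g = (\<Sum>a\<in>joint_actions m A. (\<Prod>i<m. pmf (\<pi> i) (a i)) * g a)"

definition best_resp_val :: "nat \<Rightarrow> (nat \<Rightarrow> 'f set set) \<Rightarrow> (nat \<Rightarrow> 'f set pmf) \<Rightarrow> nat \<Rightarrow> ('f joint \<Rightarrow> real) \<Rightarrow> real" where
  "best_resp_val m A \<pi> i g = (SUP p\<in>{p. set_pmf p \<subseteq> A i}. expect_prod m A (\<pi>(i := p)) g)"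

definition Gap :: "nat \<Rightarrow> (nat \<Rightarrow> 'f set set) \<Rightarrow> ('f \<Rightarrow> nat \<Rightarrow> real) \<Rightarrow> (nat \<Rightarrow> 'f set pmf) \<Rightarrow> real" where
  "Gap m A rf \<pi> = (MAX i\<in>{..<m}. best_resp_val m A \<pi> i (mean_reward m rf i)
                                  - expect_prod m A \<pi> (mean_reward m rf i))"

definition is_NE :: "nat \<Rightarrow> (nat \<Rightarrow> 'f set set) \<Rightarrow> ('f \<Rightarrow> nat \<Rightarrow> real) \<Rightarrow> (nat \<Rightarrow> 'f set pmf) \<Rightarrow> bool" where
  "is_NE m A rf \<pi> \<longleftrightarrow> is_product_policy m A \<pi> \<and> Gap m A rf \<pi> = 0"

text \<open>b is a bonus term for rhat at level delta: with probability at least 1 - delta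
  (over the data, modelled by the probability space M with outcome w),
  |r_i(a) - rhat_i(a)| <= b_i(a) for all players i and joint actions a.\<close>
definition bonus_term ::
  "'w measure \<Rightarrow> real \<Rightarrow> nat \<Rightarrow> (nat \<Rightarrow> 'f set set) \<Rightarrow> ('f \<Rightarrow> nat \<Rightarrow> real)
   \<Rightarrow> ('w \<Rightarrow> nat \<Rightarrow> 'f joint \<Rightarrow> real) \<Rightarrow> ('w \<Rightarrow> nat \<Rightarrow> 'f joint \<Rightarrow> real) \<Rightarrow> bool" where
  "bonus_term M \<delta> m A rf rhat b \<longleftrightarrow>
     (\<exists>E\<in>sets M. measure M E \<ge> 1 - \<delta> \<and>
        (\<forall>w\<in>E. \<forall>i<m. \<forall>a\<in>joint_actions m A. \<bar>mean_reward m rf i a - rhat w i a\<bar> \<le> b w i a))"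

definition surrogate_obj ::
  "nat \<Rightarrow> (nat \<Rightarrow> 'f set set) \<Rightarrow> (nat \<Rightarrow> 'f joint \<Rightarrow> real) \<Rightarrow> (nat \<Rightarrow> 'f joint \<Rightarrow> real)
   \<Rightarrow> (nat \<Rightarrow> 'f set pmf) \<Rightarrow> real" where
  "surrogate_obj m A rh bb \<pi> = (MAX i\<in>{..<m}.
      best_resp_val m A \<pi> i (\<lambda>a. rh i a + bb i a) - expect_prod m A \<pi> (\<lambda>a. rh i a - bb i a))"

definition is_surrogate_minimizer ::
  "nat \<Rightarrow> (nat \<Rightarrow> 'f set set) \<Rightarrow> (nat \<Rightarrow> 'f joint \<Rightarrow> real) \<Rightarrow> (nat \<Rightarrow> 'f joint \<Rightarrow> real)
   \<Rightarrow> (nat \<Rightarrow> 'f set pmf) \<Rightarrow> bool" where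
  "is_surrogate_minimizer m A rh bb \<pi> \<longleftrightarrow> is_product_policy m A \<pi> \<and>
     (\<forall>\<pi>'. is_product_policy m A \<pi>' \<longrightarrow> surrogate_obj m A rh bb \<pi> \<le> surrogate_obj m A rh bb \<pi>')"

end

theory Submission
  imports Defs
begin

text \<open>On the event where the bonus is valid, the optimistic-minus-pessimistic surrogate dominates
  the true gap of every product policy, so the gap of its minimiser is at most the surrogate value
  at any Nash equilibrium \<pi>*. At \<pi>* the true best-response value equals the true value, and
  replacing the estimated rewards by the true ones costs at most two bonuses on each side, which
  gives the factor 2. The argument is pointwise in the data.\<close>

definition bonus_valid ::
  "nat \<Rightarrow> (nat \<Rightarrow> 'f set set) \<Rightarrow> ('f \<Rightarrow> nat \<Rightarrow> real) \<Rightarrow> (nat \<Rightarrow> 'f joint \<Rightarrow> real)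
   \<Rightarrow> (nat \<Rightarrow> 'f joint \<Rightarrow> real) \<Rightarrow> bool" where
  "bonus_valid m A rf rh bb \<longleftrightarrow>
     (\<forall>i<m. \<forall>a\<in>joint_actions m A. \<bar>mean_reward m rf i a - rh i a\<bar> \<le> bb i a)"

lemma expect_prod_mono:
  assumes "\<forall>a\<in>joint_actions m A. f a \<le> g a"
  shows "expect_prod m A \<pi> f \<le> expect_prod m A \<pi> g"
  unfolding expect_prod_def using assms
  by (intro sum_mono mult_left_mono) (auto intro: prod_nonneg)

lemma expect_prod_add_scaled:
  "expect_prod m A \<pi> (\<lambda>a. f a + c * g a) = expect_prod m A \<pi> f + c * expect_prod m A \<pi> g"
  unfolding expect_prod_def by (simp add: algebra_simps sum.distrib sum_distrib_left)

lemma expect_prod_diff_scaled: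
  "expect_prod m A \<pi> (\<lambda>a. f a - c * g a) = expect_prod m A \<pi> f - c * expect_prod m A \<pi> g"
  unfolding expect_prod_def by (simp add: algebra_simps sum_subtractf sum_distrib_left)

lemma prod_pmf_fun_upd:
  fixes i m :: nat
  assumes "i < m"
  shows "(\<Prod>j<m. pmf ((\<pi>(i := q)) j) (a j)) = pmf q (a i) * (\<Prod>j\<in>{..<m} - {i}. pmf (\<pi> j) (a j))"
proof -
  have "(\<Prod>j<m. pmf ((\<pi>(i := q)) j) (a j))
      = pmf q (a i) * (\<Prod>j\<in>{..<m} - {i}. pmf ((\<pi>(i := q)) j) (a j))"
    using assms by (subst prod.remove[OF finite_lessThan, where x = i]) auto
  also have "(\<Prod>j\<in>{..<m} - {i}. pmf ((\<pi>(i := q)) j) (a j)) = (\<Prod>j\<in>{..<m} - {i}. pmf (\<pi> j) (a j))"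
    by (rule prod.cong) auto
  finally show ?thesis .
qed

lemma expect_prod_fun_upd_mixture:
  assumes i: "i < m" and fin: "finite (A i)" and p: "set_pmf p \<subseteq> A i"
  shows "expect_prod m A (\<pi>(i := p)) g
       = (\<Sum>a'\<in>A i. pmf p a' * expect_prod m A (\<pi>(i := return_pmf a')) g)"
proof -
  define P where "P a = (\<Prod>j\<in>{..<m} - {i}. pmf (\<pi> j) (a j))" for a :: "'a joint"
  have "(\<Sum>a'\<in>A i. pmf p a' * expect_prod m A (\<pi>(i := return_pmf a')) g)
      = (\<Sum>a\<in>joint_actions m A. \<Sum>a'\<in>A i. pmf p a' * (pmf (return_pmf a') (a i) * P a * g a))"
    unfolding expect_prod_def P_def prod_pmf_fun_upd[OF i]
    by (subst sum.swap) (simp add: sum_distrib_left mult.assoc)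
  also have "\<dots> = (\<Sum>a\<in>joint_actions m A. pmf p (a i) * P a * g a)"
  proof (rule sum.cong[OF refl])
    fix a assume "a \<in> joint_actions m A"
    then have "a i \<in> A i" using i by (auto simp: joint_actions_def)
    then show "(\<Sum>a'\<in>A i. pmf p a' * (pmf (return_pmf a') (a i) * P a * g a)) = pmf p (a i) * P a * g a"
      using fin by (simp add: pmf_return indicator_def of_bool_def if_distrib if_distribR sum.delta' mult.assoc
                    cong: if_cong)
  qed
  also have "\<dots> = expect_prod m A (\<pi>(i := p)) g"
    unfolding expect_prod_def P_def prod_pmf_fun_upd[OF i] by (simp add: mult.assoc)
  finally show ?thesis by simp
qed

lemma sum_pmf_mult_le_Max:
  assumes "finite S" and "set_pmf p \<subseteq> S"
  shows "(\<Sum>a\<in>S. pmf p a * h a) \<le> Max (h ` S)"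
proof -
  have "S \<noteq> {}" using assms(2) set_pmf_not_empty[of p] by blast
  then have "(\<Sum>a\<in>S. pmf p a * h a) \<le> (\<Sum>a\<in>S. pmf p a * Max (h ` S))"
    using assms(1) by (intro sum_mono mult_left_mono) auto
  also have "\<dots> = Max (h ` S)"
    using sum_pmf_eq_1[OF assms] by (simp add: sum_distrib_right[symmetric])
  finally show ?thesis .
qed

lemma expect_prod_fun_upd_le_Max_pure:
  assumes "i < m" and "finite (A i)" and "set_pmf p \<subseteq> A i"
  shows "expect_prod m A (\<pi>(i := p)) g \<le> (MAX a'\<in>A i. expect_prod m A (\<pi>(i := return_pmf a')) g)"
  using expect_prod_fun_upd_mixture[of i m A p] sum_pmf_mult_le_Max[of "A i" p] assms by simp

lemma best_resp_val_upper:
  assumes i: "i < m" and fin: "finite (A i)" and p: "set_pmf p \<subseteq> A i"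
  shows "expect_prod m A (\<pi>(i := p)) g \<le> best_resp_val m A \<pi> i g"
  unfolding best_resp_val_def
proof (rule cSUP_upper)
  show "bdd_above ((\<lambda>p. expect_prod m A (\<pi>(i := p)) g) ` {p. set_pmf p \<subseteq> A i})"
    using expect_prod_fun_upd_le_Max_pure[of i m A] i fin by (intro bdd_aboveI2) auto
qed (use p in simp)

lemma best_resp_val_least:
  assumes "A i \<noteq> {}" and "\<And>p. set_pmf p \<subseteq> A i \<Longrightarrow> expect_prod m A (\<pi>(i := p)) g \<le> c"
  shows "best_resp_val m A \<pi> i g \<le> c"
  unfolding best_resp_val_def
proof (rule cSUP_least)
  from assms(1) obtain x where "x \<in> A i" by auto
  then show "{p. set_pmf p \<subseteq> A i} \<noteq> {}" by (auto intro!: exI[of _ "return_pmf x"])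
qed (use assms(2) in auto)

lemma best_resp_val_mono:
  assumes "i < m" and "finite (A i)" and "A i \<noteq> {}"
    and "\<forall>a\<in>joint_actions m A. f a \<le> g a"
  shows "best_resp_val m A \<pi> i f \<le> best_resp_val m A \<pi> i g"
  using assms by (intro best_resp_val_least order.trans[OF expect_prod_mono best_resp_val_upper])

lemma best_resp_val_add_scaled_le:
  assumes i: "i < m" and fin: "finite (A i)" and "A i \<noteq> {}" and "c \<ge> 0"
  shows "best_resp_val m A \<pi> i (\<lambda>a. f a + c * g a)
       \<le> best_resp_val m A \<pi> i f + c * (MAX a'\<in>A i. expect_prod m A (\<pi>(i := return_pmf a')) g)"
proof (rule best_resp_val_least)
  fix p assume p: "set_pmf p \<subseteq> A i"
  show "expect_prod m A (\<pi>(i := p)) (\<lambda>a. f a + c * g a)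
      \<le> best_resp_val m A \<pi> i f + c * (MAX a'\<in>A i. expect_prod m A (\<pi>(i := return_pmf a')) g)"
    unfolding expect_prod_add_scaled
    using best_resp_val_upper[of i m A p] expect_prod_fun_upd_le_Max_pure[of i m A p] i fin p \<open>c \<ge> 0\<close>
    by (intro add_mono mult_left_mono) auto
qed (use assms in simp)

lemma is_NE_best_resp_val_le:
  assumes "is_NE m A rf \<pi>" and "i < m"
  shows "best_resp_val m A \<pi> i (mean_reward m rf i) \<le> expect_prod m A \<pi> (mean_reward m rf i)"
proof -
  have "best_resp_val m A \<pi> i (mean_reward m rf i) - expect_prod m A \<pi> (mean_reward m rf i)
      \<le> Gap m A rf \<pi>"
    unfolding Gap_def using assms(2) by (intro Max_ge) auto
  then show ?thesis using assms(1) unfolding is_NE_def by simp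
qed

lemma player_gap_le_surrogate:
  assumes valid: "bonus_valid m A rf rh bb" and i: "i < m" and "finite (A i)" and "A i \<noteq> {}"
  shows "best_resp_val m A \<pi> i (mean_reward m rf i) - expect_prod m A \<pi> (mean_reward m rf i)
       \<le> best_resp_val m A \<pi> i (\<lambda>a. rh i a + bb i a) - expect_prod m A \<pi> (\<lambda>a. rh i a - bb i a)"
proof -
  have "best_resp_val m A \<pi> i (mean_reward m rf i) \<le> best_resp_val m A \<pi> i (\<lambda>a. rh i a + bb i a)"
    using valid i assms(3,4) unfolding bonus_valid_def by (intro best_resp_val_mono) fastforce+
  moreover have "expect_prod m A \<pi> (\<lambda>a. rh i a - bb i a) \<le> expect_prod m A \<pi> (mean_reward m rf i)"
    using valid i unfolding bonus_valid_def by (intro expect_prod_mono) fastforce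
  ultimately show ?thesis by simp
qed

lemma player_surrogate_at_NE_le:
  assumes valid: "bonus_valid m A rf rh bb" and NE: "is_NE m A rf \<pi>"
    and i: "i < m" and fin: "finite (A i)" and ne: "A i \<noteq> {}"
  shows "best_resp_val m A \<pi> i (\<lambda>a. rh i a + bb i a) - expect_prod m A \<pi> (\<lambda>a. rh i a - bb i a)
       \<le> 2 * ((MAX a'\<in>A i. expect_prod m A (\<pi>(i := return_pmf a')) (bb i)) + expect_prod m A \<pi> (bb i))"
proof -
  let ?r = "mean_reward m rf i"
  have "best_resp_val m A \<pi> i (\<lambda>a. rh i a + bb i a) \<le> best_resp_val m A \<pi> i (\<lambda>a. ?r a + 2 * bb i a)"
    using valid i fin ne unfolding bonus_valid_def by (intro best_resp_val_mono) fastforce+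
  also have "\<dots> \<le> best_resp_val m A \<pi> i ?r
      + 2 * (MAX a'\<in>A i. expect_prod m A (\<pi>(i := return_pmf a')) (bb i))"
    using i fin ne by (rule best_resp_val_add_scaled_le) simp
  also have "\<dots> \<le> expect_prod m A \<pi> ?r
      + 2 * (MAX a'\<in>A i. expect_prod m A (\<pi>(i := return_pmf a')) (bb i))"
    using is_NE_best_resp_val_le[OF NE i] by simp
  finally have upper: "best_resp_val m A \<pi> i (\<lambda>a. rh i a + bb i a) \<le> \<dots>" .
  have "expect_prod m A \<pi> (\<lambda>a. ?r a - 2 * bb i a) \<le> expect_prod m A \<pi> (\<lambda>a. rh i a - bb i a)"
    using valid i unfolding bonus_valid_def by (intro expect_prod_mono) fastforce
  with upper show ?thesis unfolding expect_prod_diff_scaled by simp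
qed

lemma Max_le_Max_pointwise:
  fixes f g :: "'a \<Rightarrow> 'b::linorder"
  assumes "finite I" and "I \<noteq> {}" and "\<And>i. i \<in> I \<Longrightarrow> f i \<le> g i"
  shows "Max (f ` I) \<le> Max (g ` I)"
  using assms by (intro Max.boundedI) (auto intro: order_trans[OF _ Max_ge])

lemma Gap_surrogate_minimizer_le:
  assumes m: "m \<ge> 1" and fin: "\<forall>j<m. finite (A j)" and ne: "\<forall>j<m. A j \<noteq> {}"
    and valid: "bonus_valid m A rf rh bb"
    and opt: "is_surrogate_minimizer m A rh bb \<pi>o"
    and NE: "is_NE m A rf \<pi>s"
  shows "Gap m A rf \<pi>o \<le> 2 * (MAX i\<in>{..<m}.
            (MAX a'\<in>A i. expect_prod m A (\<pi>s(i := return_pmf a')) (bb i))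
          + expect_prod m A \<pi>s (bb i))"
proof -
  have I: "finite {..<m}" "{..<m} \<noteq> {}" using m by (auto simp: lessThan_empty_iff)
  have "Gap m A rf \<pi>o \<le> surrogate_obj m A rh bb \<pi>o"
    unfolding Gap_def surrogate_obj_def
    using I fin ne by (intro Max_le_Max_pointwise player_gap_le_surrogate[OF valid]) auto
  also have "\<dots> \<le> surrogate_obj m A rh bb \<pi>s"
    using opt NE unfolding is_surrogate_minimizer_def is_NE_def by blast
  also have "\<dots> \<le> (MAX i\<in>{..<m}. 2 * ((MAX a'\<in>A i. expect_prod m A (\<pi>s(i := return_pmf a')) (bb i))
                                     + expect_prod m A \<pi>s (bb i)))"
    unfolding surrogate_obj_def
    using I fin ne by (intro Max_le_Max_pointwise player_surrogate_at_NE_le[OF valid NE]) auto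
  also have "\<dots> = 2 * (MAX i\<in>{..<m}. (MAX a'\<in>A i. expect_prod m A (\<pi>s(i := return_pmf a')) (bb i))
                                     + expect_prod m A \<pi>s (bb i))"
    using I by (subst mono_Max_commute[where f = "\<lambda>x. 2 * x"]) (auto simp: mono_def image_image)
  finally show ?thesis .
qed

theorem theorem1:
  fixes M :: "'w measure" and \<delta> :: real and m :: nat
    and F :: "'f set" and A :: "nat \<Rightarrow> 'f set set"
    and rf :: "'f \<Rightarrow> nat \<Rightarrow> real"
    and rhat b :: "'w \<Rightarrow> nat \<Rightarrow> 'f joint \<Rightarrow> real"
    and pi_out :: "'w \<Rightarrow> nat \<Rightarrow> 'f set pmf"
  assumes "prob_space M"
    and "0 < \<delta>" and "\<delta> < 1"
    and "m \<ge> 1"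
    and "finite F"
    and "\<forall>i<m. A i \<noteq> {} \<and> finite (A i) \<and> A i \<subseteq> Pow F"
    and "\<forall>f\<in>F. \<forall>l\<in>{1..m}. \<bar>rf f l\<bar> \<le> 1"
    and "bonus_term M \<delta> m A rf rhat b"
    and "\<forall>w\<in>space M. is_surrogate_minimizer m A (rhat w) (b w) (pi_out w)"
  shows "\<exists>E\<in>sets M. measure M E \<ge> 1 - \<delta> \<and>
     (\<forall>w\<in>E. \<forall>\<pi>s. is_NE m A rf \<pi>s \<longrightarrow>
        Gap m A rf (pi_out w) \<le> 2 * (MAX i\<in>{..<m}.
            (MAX a'\<in>A i. expect_prod m A (\<pi>s(i := return_pmf a')) (b w i))
          + expect_prod m A \<pi>s (b w i)))"
proof -
  obtain E where E: "E \<in> sets M" "measure M E \<ge> 1 - \<delta>"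
    and valid: "\<forall>w\<in>E. bonus_valid m A rf (rhat w) (b w)"
    using assms(8) unfolding bonus_term_def bonus_valid_def by blast
  have "E \<subseteq> space M" using E(1) by (rule sets.sets_into_space)
  then show ?thesis
    using E valid assms(4,6,9) by (blast intro: Gap_surrogate_minimizer_le)
qed

end
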